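(* Let $s \geq 3$ and $n \geq 2^{40s}$ be integers and let $\rho = (8s/n)^{2/s}$. Let $\chi$ be a coloring of an $n$-element set $Y$ with $s$ colors whose color classes $Y_1,\dots,Y_s$ each have size at least $n/(2s)$. Let $G_{n,\rho}(\chi)$ be the random graph obtained by including each edge of the complete $s$-partite graph with parts $Y_1,\dots,Y_s$ independently with probability $\rho$. Then $$\Pr\bigl(K_s \not\subseteq G_{n,\rho}(\chi)\bigr) \leq \exp\bigl(-2^{2s-4}n\bigr).$$
   Context: $K_s$ denotes the complete graph on $s$ vertices; $K_s \not\subseteq G$ means $G$ contains no copy of $K_s$. *)

theory Defs
  imports "HOL-Probability.Probability"
begin

text \<open>Graphs on vertex type 'a are given by their edge sets: sets of 2-element sets.\<close>

definition partite_edges :: "'a set \<Rightarrow> ('a \<Rightarrow> nat) \<Rightarrow> 'a set set" where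
  "partite_edges Y chi = {{u, v} | u v. u \<in> Y \<and> v \<in> Y \<and> chi u \<noteq> chi v}"

definition contains_clique :: "'a set set \<Rightarrow> nat \<Rightarrow> bool" where
  "contains_clique H s \<longleftrightarrow>
     (\<exists>K. finite K \<and> card K = s \<and> (\<forall>u\<in>K. \<forall>v\<in>K. u \<noteq> v \<longrightarrow> {u, v} \<in> H))"

text \<open>The random graph G_{n,rho}(chi): each edge of the complete s-partite graph is
kept independently with probability rho. A sample is the indicator function of
the kept edges.\<close>
definition random_partite_graph :: "'a set \<Rightarrow> ('a \<Rightarrow> nat) \<Rightarrow> real \<Rightarrow> ('a set \<Rightarrow> bool) pmf" where
  "random_partite_graph Y chi \<rho> = Pi_pmf (partite_edges Y chi) False (\<lambda>_. bernoulli_pmf \<rho>)"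

end

theory Submission
  imports Defs
begin

text \<open>A transversal \<open>\<phi>\<close> of the colouring, one vertex from each colour class, spans a
  potential copy of \<open>K_s\<close> whose \<open>s choose 2\<close> edges all belong to the complete
  \<open>s\<close>-partite graph. If the random graph has no \<open>K_s\<close>, none of these transversal cliques
  is fully present, and Janson's inequality bounds the probability of that by
  \<open>exp (- \<mu> + \<Delta>)\<close>. Balanced colour classes give at least \<open>(n/2s)^(s-1) n/2\<close>
  transversals, so \<open>\<mu> \<ge> 4^(s-1) n/2\<close> for the given \<open>\<rho>\<close>. Two transversals agreeing
  in exactly \<open>k\<close> classes share \<open>k choose 2\<close> edges; counting them by \<open>k\<close> (AM-GM on
  the free classes) shows that each \<open>k\<close> contributes at most \<open>4^(k-s)\<close> to \<open>\<Delta>/\<mu>\<close> once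
  \<open>n \<ge> 2^(40s)\<close>. Hence \<open>\<Delta> \<le> \<mu>/3\<close>, and the exponent is at most \<open>-2\<mu>/3\<close>.\<close>

section \<open>Janson's inequality for product measures\<close>

definition all_present :: "'e set \<Rightarrow> ('e \<Rightarrow> bool) set" where
  "all_present T = {f. \<forall>e\<in>T. f e}"

lemma all_present_Un: "all_present (A \<union> B) = all_present A \<inter> all_present B"
  by (auto simp: all_present_def)

lemma measure_pair_pmf_Times:
  "measure_pmf.prob (pair_pmf M N) (A \<times> B) = measure_pmf.prob M A * measure_pmf.prob N B"
proof -
  have "measure_pmf.prob (pair_pmf M N) (A \<times> B)
      = measure_pmf.prob (pair_pmf M N) ((A \<inter> set_pmf M) \<times> (B \<inter> set_pmf N))"
    by (subst measure_Int_set_pmf[symmetric]) (simp add: Times_Int_Times Int_ac)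
  also have "\<dots> = measure_pmf.prob M (A \<inter> set_pmf M) * measure_pmf.prob N (B \<inter> set_pmf N)"
    by (rule measure_pmf_prob_product) (auto intro: countable_subset)
  finally show ?thesis by (simp add: measure_Int_set_pmf)
qed

lemma prob_all_present:
  assumes "finite E" "T \<subseteq> E" "0 \<le> \<rho>" "\<rho> \<le> 1"
  shows "measure_pmf.prob (Pi_pmf E False (\<lambda>_. bernoulli_pmf \<rho>)) (all_present T) = \<rho> ^ card T"
proof -
  have "all_present T = Pi E (\<lambda>e. if e \<in> T then {True} else UNIV)"
    using assms(2) by (auto simp: all_present_def Pi_def)
  then have "measure_pmf.prob (Pi_pmf E False (\<lambda>_. bernoulli_pmf \<rho>)) (all_present T)
      = (\<Prod>e\<in>E. if e \<in> T then \<rho> else 1)"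
    using assms by (simp add: measure_Pi_pmf_Pi measure_pmf_single if_distrib cong: if_cong)
  also have "\<dots> = \<rho> ^ card T"
    using assms(1,2) by (simp add: prod.If_cases Int_absorb1)
  finally show ?thesis .
qed

lemma prob_all_present_Int_independent:
  assumes "finite E" "T \<subseteq> E"
    and indep: "\<And>f g. (\<And>e. e \<notin> T \<Longrightarrow> f e = g e) \<Longrightarrow> f \<in> D \<longleftrightarrow> g \<in> D"
  shows "measure_pmf.prob (Pi_pmf E False p) (all_present T \<inter> D)
       = measure_pmf.prob (Pi_pmf E False p) (all_present T) * measure_pmf.prob (Pi_pmf E False p) D"
proof -
  define merge where "merge = (\<lambda>(f::'a \<Rightarrow> bool, g) e. if e \<in> T then f e else g e)"
  have "finite T" using assms(1,2) finite_subset by blast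
  have split: "Pi_pmf E False p = map_pmf merge (pair_pmf (Pi_pmf T False p) (Pi_pmf (E - T) False p))"
    using Pi_pmf_union[of T "E - T" False p] assms(1,2) \<open>finite T\<close>
    by (simp add: merge_def Un_absorb1 del: if_bool_eq_conj)
  have "merge (f, g) \<in> D \<longleftrightarrow> g \<in> D" for f g
    by (rule indep) (simp add: merge_def)
  moreover have "merge (f, g) \<in> all_present T \<longleftrightarrow> f \<in> all_present T" for f g
    by (auto simp: merge_def all_present_def)
  ultimately have "merge -` (all_present T \<inter> D) = all_present T \<times> D"
    and "merge -` all_present T = all_present T \<times> UNIV" and "merge -` D = UNIV \<times> D"
    by auto
  then show ?thesis
    unfolding split measure_map_pmf by (simp add: measure_pair_pmf_Times)
qed

text \<open>Harris' inequality for a principal up-set: forcing the coordinates in \<open>T\<close> to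
  \<open>True\<close> makes the decreasing event \<open>D\<close> independent of them while only shrinking it.\<close>
lemma prob_all_present_Int_decreasing_le:
  assumes "finite E" "T \<subseteq> E"
    and decreasing: "\<And>f g. f \<in> D \<Longrightarrow> (\<And>e. g e \<Longrightarrow> f e) \<Longrightarrow> g \<in> D"
  shows "measure_pmf.prob (Pi_pmf E False p) (all_present T \<inter> D)
       \<le> measure_pmf.prob (Pi_pmf E False p) (all_present T) * measure_pmf.prob (Pi_pmf E False p) D"
proof -
  let ?P = "measure_pmf.prob (Pi_pmf E False p)"
  define raise where "raise = (\<lambda>f e. e \<in> T \<or> f e)"
  have "raise f = f" if "f \<in> all_present T" for f
    using that by (auto simp: raise_def all_present_def)
  then have "all_present T \<inter> D = all_present T \<inter> raise -` D"
    by auto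
  also have "?P \<dots> = ?P (all_present T) * ?P (raise -` D)"
  proof (rule prob_all_present_Int_independent[OF assms(1,2)])
    fix f g :: "'a \<Rightarrow> bool" assume "\<And>e. e \<notin> T \<Longrightarrow> f e = g e"
    then have "raise f = raise g" by (auto simp: raise_def)
    then show "f \<in> raise -` D \<longleftrightarrow> g \<in> raise -` D" by simp
  qed
  also have "\<dots> \<le> ?P (all_present T) * ?P D"
    by (intro mult_left_mono measure_pmf.finite_measure_mono)
      (auto simp: raise_def intro: decreasing)
  finally show ?thesis .
qed

definition janson_mu :: "('e \<Rightarrow> bool) pmf \<Rightarrow> ('i \<Rightarrow> 'e set) \<Rightarrow> 'i set \<Rightarrow> real" where
  "janson_mu M S I = (\<Sum>i\<in>I. measure_pmf.prob M (all_present (S i)))"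

definition janson_delta :: "('e \<Rightarrow> bool) pmf \<Rightarrow> ('i \<Rightarrow> 'e set) \<Rightarrow> 'i set \<Rightarrow> real" where
  "janson_delta M S I = (\<Sum>i\<in>I. \<Sum>j\<in>{j\<in>I. j \<noteq> i \<and> S i \<inter> S j \<noteq> {}}.
     measure_pmf.prob M (all_present (S i) \<inter> all_present (S j)))"

text \<open>Writing \<open>B i = all_present (S i)\<close>: the event \<open>D\<close>
  keeps only the constraints from events disjoint from \<open>S x\<close>, so \<open>P (B x \<inter> D) = P (B x) P D\<close>;
  an outcome of \<open>B x \<inter> D\<close> outside \<open>C\<close> lies in some overlapping \<open>B j\<close>, and Harris'
  inequality gives \<open>P (B x \<inter> B j \<inter> D) \<le> P (B x \<inter> B j) P D\<close>.\<close>
lemma prob_all_present_Int_none_ge: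
  fixes p :: "'e \<Rightarrow> bool pmf" and S :: "'i \<Rightarrow> 'e set"
  assumes "finite E" "finite I" "S x \<subseteq> E" "\<And>i. i \<in> I \<Longrightarrow> S i \<subseteq> E"
  defines "P \<equiv> measure_pmf.prob (Pi_pmf E False p)"
    and "C \<equiv> {f. \<forall>i\<in>I. f \<notin> all_present (S i)}"
    and "D \<equiv> {f. \<forall>i\<in>I. S x \<inter> S i = {} \<longrightarrow> f \<notin> all_present (S i)}"
  shows "P D * (P (all_present (S x))
           - (\<Sum>j\<in>{j\<in>I. S x \<inter> S j \<noteq> {}}. P (all_present (S x) \<inter> all_present (S j))))
         \<le> P (all_present (S x) \<inter> C)"
proof -
  define J where "J = {j\<in>I. S x \<inter> S j \<noteq> {}}"
  have "all_present (S x) \<inter> D \<subseteq> (all_present (S x) \<inter> C) \<union> (\<Union>j\<in>J. all_present (S x \<union> S j) \<inter> D)"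
    by (auto simp: C_def D_def J_def all_present_def)
  then have "P (all_present (S x) \<inter> D)
      \<le> P ((all_present (S x) \<inter> C) \<union> (\<Union>j\<in>J. all_present (S x \<union> S j) \<inter> D))"
    unfolding P_def by (rule measure_pmf.finite_measure_mono) simp
  also have "\<dots> \<le> P (all_present (S x) \<inter> C) + P (\<Union>j\<in>J. all_present (S x \<union> S j) \<inter> D)"
    unfolding P_def by (rule measure_Un_le) auto
  also have "P (\<Union>j\<in>J. all_present (S x \<union> S j) \<inter> D) \<le> (\<Sum>j\<in>J. P (all_present (S x \<union> S j) \<inter> D))"
    unfolding P_def using \<open>finite I\<close>
    by (intro measure_pmf.finite_measure_subadditive_finite) (auto simp: J_def)
  also have "(\<Sum>j\<in>J. P (all_present (S x \<union> S j) \<inter> D))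
      \<le> (\<Sum>j\<in>J. P (all_present (S x) \<inter> all_present (S j)) * P D)"
  proof (rule sum_mono)
    fix j assume "j \<in> J"
    then have "S x \<union> S j \<subseteq> E" using assms(3,4) by (auto simp: J_def)
    then show "P (all_present (S x \<union> S j) \<inter> D) \<le> P (all_present (S x) \<inter> all_present (S j)) * P D"
      unfolding P_def all_present_Un[symmetric]
      by (rule prob_all_present_Int_decreasing_le[OF assms(1)])
        (simp_all add: D_def all_present_def, blast)
  qed
  finally have upper: "P (all_present (S x) \<inter> D) \<le> P (all_present (S x) \<inter> C)
      + (\<Sum>j\<in>J. P (all_present (S x) \<inter> all_present (S j))) * P D"
    by (simp add: sum_distrib_right)
  have "P (all_present (S x) \<inter> D) = P (all_present (S x)) * P D"
    unfolding P_def by (rule prob_all_present_Int_independent[OF assms(1,3)])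
      (simp add: D_def all_present_def disjoint_iff, metis)
  with upper show ?thesis
    by (simp add: J_def algebra_simps)
qed

lemma le_mult_exp_neg:
  fixes a c d x :: real
  assumes "0 \<le> c" "c \<le> d" "x \<le> c" "x \<le> c - d * a"
  shows "x \<le> c * exp (- a)"
proof (cases "a \<ge> 0")
  case True
  have "x \<le> c * (1 - a)"
    using assms True mult_right_mono[of c d a] by (simp add: algebra_simps)
  also have "\<dots> \<le> c * exp (- a)"
    using assms(1) exp_ge_add_one_self[of "- a"] by (intro mult_left_mono) auto
  finally show ?thesis .
next
  case False
  then show ?thesis
    using assms(1,3) mult_left_mono[of 1 "exp (- a)" c] by simp
qed

lemma janson_step:
  fixes p :: "'e \<Rightarrow> bool pmf" and S :: "'i \<Rightarrow> 'e set"
  assumes "finite E" "finite I" "S x \<subseteq> E" "\<And>i. i \<in> I \<Longrightarrow> S i \<subseteq> E"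
  defines "P \<equiv> measure_pmf.prob (Pi_pmf E False p)"
  shows "P {f. \<forall>i\<in>insert x I. f \<notin> all_present (S i)}
    \<le> P {f. \<forall>i\<in>I. f \<notin> all_present (S i)} * exp (- (P (all_present (S x))
         - (\<Sum>j\<in>{j\<in>I. S x \<inter> S j \<noteq> {}}. P (all_present (S x) \<inter> all_present (S j)))))"
proof -
  define C where "C = {f. \<forall>i\<in>I. f \<notin> all_present (S i)}"
  define D where "D = {f. \<forall>i\<in>I. S x \<inter> S i = {} \<longrightarrow> f \<notin> all_present (S i)}"
  have "{f. \<forall>i\<in>insert x I. f \<notin> all_present (S i)} = C - all_present (S x) \<inter> C"
    by (auto simp: C_def)
  then have new: "P {f. \<forall>i\<in>insert x I. f \<notin> all_present (S i)} = P C - P (all_present (S x) \<inter> C)"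
    unfolding P_def by (simp add: measure_pmf.finite_measure_Diff)
  show ?thesis
    unfolding C_def[symmetric]
  proof (rule le_mult_exp_neg)
    show "P C \<le> P D"
      unfolding P_def by (rule measure_pmf.finite_measure_mono) (auto simp: C_def D_def)
    show "P {f. \<forall>i\<in>insert x I. f \<notin> all_present (S i)} \<le> P C - P D * (P (all_present (S x))
         - (\<Sum>j\<in>{j\<in>I. S x \<inter> S j \<noteq> {}}. P (all_present (S x) \<inter> all_present (S j))))"
      using new prob_all_present_Int_none_ge[where p = p and S = S and x = x, OF assms(1-4)]
      unfolding P_def C_def D_def by linarith
  qed (use new in \<open>auto simp: P_def\<close>)
qed

lemma janson_delta_insert_ge:
  assumes "finite I" "x \<notin> I"
  shows "janson_delta M S I + (\<Sum>j\<in>{j\<in>I. S x \<inter> S j \<noteq> {}}.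
           measure_pmf.prob M (all_present (S x) \<inter> all_present (S j)))
         \<le> janson_delta M S (insert x I)"
proof -
  let ?p = "\<lambda>i j. measure_pmf.prob M (all_present (S i) \<inter> all_present (S j))"
  have "janson_delta M S I \<le> (\<Sum>i\<in>I. \<Sum>j\<in>{j\<in>insert x I. j \<noteq> i \<and> S i \<inter> S j \<noteq> {}}. ?p i j)"
    unfolding janson_delta_def using assms(1)
    by (intro sum_mono sum_mono2) auto
  moreover have "{j\<in>insert x I. j \<noteq> x \<and> S x \<inter> S j \<noteq> {}} = {j\<in>I. S x \<inter> S j \<noteq> {}}"
    using assms(2) by auto
  ultimately show ?thesis
    using assms by (simp add: janson_delta_def)
qed

theorem janson_inequality:
  assumes "finite E" "finite I" "\<And>i. i \<in> I \<Longrightarrow> S i \<subseteq> E"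
  shows "measure_pmf.prob (Pi_pmf E False p) {f. \<forall>i\<in>I. f \<notin> all_present (S i)}
    \<le> exp (- janson_mu (Pi_pmf E False p) S I + janson_delta (Pi_pmf E False p) S I)"
  using assms(2,3)
proof (induction I rule: finite_induct)
  case empty
  then show ?case by (simp add: janson_mu_def janson_delta_def)
next
  case (insert x I)
  let ?M = "Pi_pmf E False p"
  let ?P = "measure_pmf.prob ?M"
  define a where "a = ?P (all_present (S x))
    - (\<Sum>j\<in>{j\<in>I. S x \<inter> S j \<noteq> {}}. ?P (all_present (S x) \<inter> all_present (S j)))"
  have "?P {f. \<forall>i\<in>insert x I. f \<notin> all_present (S i)} \<le> ?P {f. \<forall>i\<in>I. f \<notin> all_present (S i)} * exp (- a)"
    unfolding a_def using insert.prems by (intro janson_step[OF assms(1) insert.hyps(1)]) auto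
  also have "\<dots> \<le> exp (- janson_mu ?M S I + janson_delta ?M S I) * exp (- a)"
    using insert by (intro mult_right_mono) auto
  also have "\<dots> \<le> exp (- janson_mu ?M S (insert x I) + janson_delta ?M S (insert x I))"
    using janson_delta_insert_ge[OF insert.hyps(1,2), of ?M S] insert.hyps
    by (simp add: a_def janson_mu_def flip: exp_add)
  finally show ?case .
qed

section \<open>Transversal cliques\<close>

definition colour_class :: "'a set \<Rightarrow> ('a \<Rightarrow> nat) \<Rightarrow> nat \<Rightarrow> 'a set" where
  "colour_class Y col i = {y\<in>Y. col y = i}"

definition transversals :: "'a set \<Rightarrow> ('a \<Rightarrow> nat) \<Rightarrow> nat \<Rightarrow> (nat \<Rightarrow> 'a) set" where
  "transversals Y col s = (\<Pi>\<^sub>E i\<in>{..<s}. colour_class Y col i)"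

definition clique_edges :: "(nat \<Rightarrow> 'a) \<Rightarrow> nat set \<Rightarrow> 'a set set" where
  "clique_edges \<phi> A = {{\<phi> i, \<phi> j} | i j. i \<in> A \<and> j \<in> A \<and> i \<noteq> j}"

lemma transversalD:
  assumes "\<phi> \<in> transversals Y col s" "i < s"
  shows "\<phi> i \<in> Y" "col (\<phi> i) = i"
  using assms by (auto simp: transversals_def colour_class_def)

lemma inj_on_transversal:
  assumes "\<phi> \<in> transversals Y col s"
  shows "inj_on \<phi> {..<s}"
proof (rule inj_onI)
  fix i j assume "i \<in> {..<s}" "j \<in> {..<s}" "\<phi> i = \<phi> j"
  then show "i = j" using transversalD(2)[OF assms] by (metis lessThan_iff)
qed

lemma finite_transversals: "finite Y \<Longrightarrow> finite (transversals Y col s)"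
  by (auto simp: transversals_def colour_class_def intro!: finite_PiE)

lemma card_transversals:
  "card (transversals Y col s) = (\<Prod>i<s. card (colour_class Y col i))"
  by (simp add: transversals_def card_PiE)

lemma clique_edges_subset_partite_edges:
  assumes "\<phi> \<in> transversals Y col s"
  shows "clique_edges \<phi> {..<s} \<subseteq> partite_edges Y col"
  using transversalD[OF assms] by (fastforce simp: clique_edges_def partite_edges_def)

lemma card_clique_edges:
  assumes "finite A" "inj_on \<phi> A"
  shows "card (clique_edges \<phi> A) = card A choose 2"
proof -
  have "clique_edges \<phi> A = image \<phi> ` {B. B \<subseteq> A \<and> card B = 2}"
  proof (intro equalityI subsetI)
    fix e assume "e \<in> clique_edges \<phi> A"
    then obtain i j where "i \<in> A" "j \<in> A" "i \<noteq> j" "e = \<phi> ` {i, j}"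
      by (auto simp: clique_edges_def)
    then show "e \<in> image \<phi> ` {B. B \<subseteq> A \<and> card B = 2}" by (intro image_eqI[where x = "{i, j}"]) auto
  next
    fix e assume "e \<in> image \<phi> ` {B. B \<subseteq> A \<and> card B = 2}"
    then obtain i j where "{i, j} \<subseteq> A" "i \<noteq> j" "e = {\<phi> i, \<phi> j}"
      by (auto simp: card_2_iff)
    then show "e \<in> clique_edges \<phi> A" by (auto simp: clique_edges_def)
  qed
  moreover have "inj_on (image \<phi>) {B. B \<subseteq> A \<and> card B = 2}"
    by (rule inj_on_subset[OF inj_on_image_Pow[OF assms(2)]]) auto
  ultimately show ?thesis
    using n_subsets[OF assms(1)] by (simp add: card_image)
qed

lemma two_le_card_if_clique_edges_nonempty:
  assumes "clique_edges \<phi> A \<noteq> {}" "finite A"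
  shows "2 \<le> card A"
proof -
  obtain i j where "i \<in> A" "j \<in> A" "i \<noteq> j"
    using assms(1) by (auto simp: clique_edges_def)
  then have "card {i, j} \<le> card A" using assms(2) by (intro card_mono) auto
  with \<open>i \<noteq> j\<close> show ?thesis by simp
qed

text \<open>Since the vertex \<open>\<phi> i\<close> has colour \<open>i\<close>, an edge is shared by two
  transversal cliques only if both transversals agree at both of its ends.\<close>
lemma clique_edges_Int_transversals:
  assumes \<phi>: "\<phi> \<in> transversals Y col s" and \<psi>: "\<psi> \<in> transversals Y col s"
  shows "clique_edges \<phi> {..<s} \<inter> clique_edges \<psi> {..<s} = clique_edges \<phi> {i. i < s \<and> \<phi> i = \<psi> i}"
proof (intro equalityI subsetI)
  fix e assume e: "e \<in> clique_edges \<phi> {..<s} \<inter> clique_edges \<psi> {..<s}"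
  then obtain i j i' j' where ij: "i < s" "j < s" "i \<noteq> j" "e = {\<phi> i, \<phi> j}"
    and ij': "i' < s" "j' < s" "e = {\<psi> i', \<psi> j'}"
    by (auto simp: clique_edges_def)
  have "(\<phi> i = \<psi> i' \<and> \<phi> j = \<psi> j') \<or> (\<phi> i = \<psi> j' \<and> \<phi> j = \<psi> i')"
    using ij(4) ij'(3) by (metis doubleton_eq_iff)
  moreover have "col (\<phi> i) = i" "col (\<phi> j) = j" "col (\<psi> i') = i'" "col (\<psi> j') = j'"
    using transversalD(2)[OF \<phi>] transversalD(2)[OF \<psi>] ij ij' by auto
  ultimately have "\<phi> i = \<psi> i \<and> \<phi> j = \<psi> j"
    by auto
  with ij show "e \<in> clique_edges \<phi> {i. i < s \<and> \<phi> i = \<psi> i}"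
    unfolding clique_edges_def by blast
next
  fix e assume "e \<in> clique_edges \<phi> {i. i < s \<and> \<phi> i = \<psi> i}"
  then obtain i j where "i < s" "j < s" "i \<noteq> j" "e = {\<phi> i, \<phi> j}" "e = {\<psi> i, \<psi> j}"
    by (auto simp: clique_edges_def)
  then show "e \<in> clique_edges \<phi> {..<s} \<inter> clique_edges \<psi> {..<s}"
    unfolding clique_edges_def by blast
qed

lemma contains_clique_if_all_present:
  assumes "\<phi> \<in> transversals Y col s" "f \<in> all_present (clique_edges \<phi> {..<s})"
  shows "contains_clique {e. f e} s"
  unfolding contains_clique_def
proof (intro exI conjI ballI impI)
  show "finite (\<phi> ` {..<s})" "card (\<phi> ` {..<s}) = s"
    using card_image[OF inj_on_transversal[OF assms(1)]] by auto
  fix u v assume "u \<in> \<phi> ` {..<s}" "v \<in> \<phi> ` {..<s}" "u \<noteq> v"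
  then have "{u, v} \<in> clique_edges \<phi> {..<s}"
    by (auto simp: clique_edges_def)
  with assms(2) show "{u, v} \<in> {e. f e}"
    by (simp add: all_present_def)
qed

lemma card_transversals_agreeing_on:
  assumes "\<phi> \<in> transversals Y col s" "A \<subseteq> {..<s}"
  shows "card {\<psi> \<in> transversals Y col s. \<forall>i\<in>A. \<psi> i = \<phi> i}
       = (\<Prod>i\<in>{..<s} - A. card (colour_class Y col i))"
proof -
  have "{\<psi> \<in> transversals Y col s. \<forall>i\<in>A. \<psi> i = \<phi> i}
      = (\<Pi>\<^sub>E i\<in>{..<s}. if i \<in> A then {\<phi> i} else colour_class Y col i)"
    using assms by (auto simp: transversals_def PiE_def Pi_def split: if_splits)
  then have "card {\<psi> \<in> transversals Y col s. \<forall>i\<in>A. \<psi> i = \<phi> i}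
      = (\<Prod>i<s. if i \<in> A then 1 else card (colour_class Y col i))"
    by (simp add: card_PiE if_distrib cong: if_cong)
  also have "\<dots> = (\<Prod>i\<in>{..<s} - A. card (colour_class Y col i))"
    by (simp add: prod.If_cases Diff_eq)
  finally show ?thesis .
qed

lemma sum_card_colour_class_le:
  assumes "finite Y"
  shows "(\<Sum>i\<in>B. card (colour_class Y col i)) \<le> card Y"
proof (cases "finite B")
  case True
  have "(\<Sum>i\<in>B. card (colour_class Y col i)) = card (\<Union>i\<in>B. colour_class Y col i)"
    using True assms by (intro card_UN_disjoint[symmetric]) (auto simp: colour_class_def)
  also have "\<dots> \<le> card Y"
    using assms by (intro card_mono) (auto simp: colour_class_def)
  finally show ?thesis .
qed simp

lemma sum_card_colour_class:
  assumes "finite Y" "\<forall>y\<in>Y. col y < s"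
  shows "(\<Sum>i<s. card (colour_class Y col i)) = card Y"
proof -
  have "(\<Sum>i<s. card (colour_class Y col i)) = card (\<Union>i<s. colour_class Y col i)"
    using assms(1) by (intro card_UN_disjoint[symmetric]) (auto simp: colour_class_def)
  also have "(\<Union>i<s. colour_class Y col i) = Y"
    using assms(2) by (auto simp: colour_class_def)
  finally show ?thesis .
qed

lemma prod_le_mean_power:
  fixes y :: "'i \<Rightarrow> real"
  assumes "finite B" "B \<noteq> {}" "\<And>i. i \<in> B \<Longrightarrow> 0 \<le> y i" "(\<Sum>i\<in>B. y i) \<le> m"
  shows "(\<Prod>i\<in>B. y i) \<le> (m / card B) ^ card B"
proof -
  have "card B > 0" using assms(1,2) by (simp add: card_gt_0_iff)
  have "(\<Prod>i\<in>B. y i) powr (1 / card B) \<le> (\<Sum>i\<in>B. y i / card B)"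
    using arith_geom_mean[OF assms(1,2), of y] assms(3) by simp
  also have "\<dots> \<le> m / card B"
    using assms(4) by (simp add: sum_divide_distrib[symmetric] divide_right_mono)
  finally have mean: "(\<Prod>i\<in>B. y i) powr (1 / card B) \<le> m / card B" .
  have "(\<Prod>i\<in>B. y i) = ((\<Prod>i\<in>B. y i) powr (1 / card B)) ^ card B"
    using \<open>card B > 0\<close> assms(3)
    by (simp add: prod_nonneg powr_powr flip: powr_realpow')
  also have "\<dots> \<le> (m / card B) ^ card B"
    using mean by (intro power_mono) auto
  finally show ?thesis .
qed

text \<open>Such a \<open>\<psi>\<close> is fixed on a \<open>k\<close>-set of classes and free on the other \<open>s - k\<close>,
  whose sizes sum to at most \<open>n\<close>; AM-GM bounds the product of these sizes.\<close>
lemma card_transversals_with_agreement_le: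
  assumes "finite Y" "\<phi> \<in> transversals Y col s" "k < s"
  shows "real (card {\<psi> \<in> transversals Y col s. card {i. i < s \<and> \<phi> i = \<psi> i} = k})
    \<le> real (s choose k) * (real (card Y) / real (s - k)) ^ (s - k)"
proof -
  define \<A> where "\<A> = {A. A \<subseteq> {..<s} \<and> card A = k}"
  define agreeing where "agreeing A = {\<psi> \<in> transversals Y col s. \<forall>i\<in>A. \<psi> i = \<phi> i}" for A
  have "finite \<A>" by (simp add: \<A>_def finite_subset[of _ "Pow {..<s}"])
  have "{\<psi> \<in> transversals Y col s. card {i. i < s \<and> \<phi> i = \<psi> i} = k} \<subseteq> (\<Union>A\<in>\<A>. agreeing A)"
  proof
    fix \<psi> assume "\<psi> \<in> {\<psi> \<in> transversals Y col s. card {i. i < s \<and> \<phi> i = \<psi> i} = k}"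
    then have "{i. i < s \<and> \<phi> i = \<psi> i} \<in> \<A>" "\<psi> \<in> agreeing {i. i < s \<and> \<phi> i = \<psi> i}"
      by (auto simp: \<A>_def agreeing_def)
    then show "\<psi> \<in> (\<Union>A\<in>\<A>. agreeing A)" by blast
  qed
  then have "card {\<psi> \<in> transversals Y col s. card {i. i < s \<and> \<phi> i = \<psi> i} = k}
      \<le> (\<Sum>A\<in>\<A>. card (agreeing A))"
    using \<open>finite \<A>\<close> finite_transversals[OF assms(1)]
    by (intro order.trans[OF card_mono card_UN_le]) (auto simp: agreeing_def)
  then have "real (card {\<psi> \<in> transversals Y col s. card {i. i < s \<and> \<phi> i = \<psi> i} = k})
      \<le> (\<Sum>A\<in>\<A>. \<Prod>i\<in>{..<s} - A. real (card (colour_class Y col i)))"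
    unfolding agreeing_def \<A>_def of_nat_le_iff[symmetric, where 'a = real]
    by (simp add: card_transversals_agreeing_on[OF assms(2)])
  also have "\<dots> \<le> (\<Sum>A\<in>\<A>. (real (card Y) / real (s - k)) ^ (s - k))"
  proof (rule sum_mono)
    fix A assume "A \<in> \<A>"
    then have "card ({..<s} - A) = s - k" "{..<s} - A \<noteq> {}"
      using assms(3) by (auto simp: \<A>_def card_Diff_subset finite_subset)
    moreover have "(\<Sum>i\<in>{..<s} - A. real (card (colour_class Y col i))) \<le> real (card Y)"
      using sum_card_colour_class_le[OF assms(1)] by (simp flip: of_nat_sum)
    ultimately show "(\<Prod>i\<in>{..<s} - A. real (card (colour_class Y col i)))
        \<le> (real (card Y) / real (s - k)) ^ (s - k)"
      using prod_le_mean_power[of "{..<s} - A"] by simp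
  qed
  also have "\<dots> = real (s choose k) * (real (card Y) / real (s - k)) ^ (s - k)"
    by (simp add: \<A>_def n_subsets)
  finally show ?thesis .
qed

lemma power_add_sum_le_prod_add:
  fixes a :: real and d :: "'i \<Rightarrow> real"
  assumes "finite J" "0 \<le> a" "\<And>i. i \<in> J \<Longrightarrow> 0 \<le> d i"
  shows "a ^ (card J + 1) + a ^ card J * (\<Sum>i\<in>J. d i) \<le> a * (\<Prod>i\<in>J. a + d i)"
  using assms
proof (induction J rule: finite_induct)
  case (insert x J)
  have "0 \<le> d x" "0 \<le> (\<Sum>i\<in>J. d i)"
    using insert.prems by (auto intro: sum_nonneg)
  then have "a ^ (card J + 2) + a ^ (card J + 1) * (d x + (\<Sum>i\<in>J. d i))
      \<le> (a + d x) * (a ^ (card J + 1) + a ^ card J * (\<Sum>i\<in>J. d i))"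
    using insert.prems by (simp add: algebra_simps)
  also have "\<dots> \<le> (a + d x) * (a * (\<Prod>i\<in>J. a + d i))"
    using insert by (intro mult_left_mono) auto
  finally show ?case
    using insert.hyps by (simp add: algebra_simps)
qed simp

lemma card_transversals_ge:
  fixes a :: real
  assumes "finite Y" "\<forall>y\<in>Y. col y < s" "1 \<le> s" "0 < a"
    and "\<And>i. i < s \<Longrightarrow> a \<le> card (colour_class Y col i)"
  shows "a ^ (s - 1) * (real (card Y) - real s * a) \<le> real (card (transversals Y col s))"
proof -
  define d where "d i = real (card (colour_class Y col i)) - a" for i
  have "(\<Sum>i<s. d i) = real (card Y) - real s * a"
    using sum_card_colour_class[OF assms(1,2)] by (simp add: d_def sum_subtractf flip: of_nat_sum)
  moreover have "a ^ (s + 1) + a ^ s * (\<Sum>i<s. d i) \<le> a * (\<Prod>i<s. a + d i)"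
    using power_add_sum_le_prod_add[of "{..<s}" a d] assms(4,5) by (simp add: d_def)
  moreover have "a ^ s = a * a ^ (s - 1)"
    using assms(3) by (simp flip: power_Suc)
  moreover have "0 \<le> a ^ (s + 1)"
    using assms(4) by simp
  ultimately have "a * (a ^ (s - 1) * (real (card Y) - real s * a)) \<le> a * (\<Prod>i<s. a + d i)"
    by (simp add: mult.assoc)
  then show ?thesis
    using assms(4) by (simp add: d_def card_transversals)
qed

section \<open>Numerical estimates\<close>

lemma eight_mul_le_four_power:
  assumes "3 \<le> s"
  shows "8 * real s \<le> 4 ^ s"
proof -
  have "8 * s \<le> 2 ^ s * 2 ^ s"
    using power_increasing[OF assms, of "2::nat"] less_exp[of s] by (intro mult_mono) auto
  then have "8 * s \<le> (4::nat) ^ s"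
    by (simp flip: power_mult_distrib)
  then show ?thesis
    by (metis of_nat_le_iff of_nat_mult of_nat_numeral of_nat_power)
qed

lemma edge_probability_root:
  fixes s n :: nat
  assumes "3 \<le> s" "2 powr (40 * real s) \<le> real n"
  defines "r \<equiv> (8 * real s / real n) powr (1 / real s)"
  shows "(8 * real s / real n) powr (2 / real s) = r ^ 2"
    and "real n * r ^ s = 8 * real s"
    and "0 \<le> r"
    and "r \<le> 1 / 2 ^ 38"
proof -
  have "2 powr (40 * real s) = 2 ^ (40 * s)"
    using powr_realpow[of 2 "40 * s"] by simp
  then have n: "2 ^ (40 * s) \<le> real n"
    using assms(2) by linarith
  then have "0 < real n"
    by (smt (verit) zero_less_power)
  have q: "8 * real s / real n \<noteq> 0"
    using assms(1) \<open>0 < real n\<close> by simp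
  show "(8 * real s / real n) powr (2 / real s) = r ^ 2"
    unfolding r_def using powr_power[OF q] by simp
  have rs: "r ^ s = 8 * real s / real n"
    unfolding r_def using powr_power[OF q, of "1 / real s" s] assms(1) by simp
  then show "real n * r ^ s = 8 * real s"
    using \<open>0 < real n\<close> by simp
  show "0 \<le> r"
    by (simp add: r_def)
  have "r ^ s \<le> 4 ^ s / 2 ^ (40 * s)"
    unfolding rs using eight_mul_le_four_power[OF assms(1)] n \<open>0 < real n\<close> by (intro frac_le) auto
  also have "\<dots> = (1 / 2 ^ 38) ^ s"
    by (simp add: power_mult flip: power_divide)
  finally show "r \<le> 1 / 2 ^ 38"
    using assms(1) \<open>0 \<le> r\<close> by simp
qed

lemma sum_quarter_powers_le: "(\<Sum>k\<in>{m..<s}. (1/4::real) ^ (s - k)) \<le> 1/3"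
proof (induction s)
  case (Suc s)
  show ?case
  proof (cases "m \<le> s")
    case True
    then have "(\<Sum>k\<in>{m..<Suc s}. (1/4::real) ^ (Suc s - k)) = 1/4 + (1/4) * (\<Sum>k\<in>{m..<s}. (1/4) ^ (s - k))"
      by (simp add: sum_distrib_left Suc_diff_le flip: power_Suc)
    with Suc.IH show ?thesis by simp
  qed simp
qed simp

lemma choose_two_diff:
  assumes "k \<le> s"
  shows "2 * ((s choose 2) - (k choose 2)) = (s - k) * (s + k - 1)"
proof -
  have two_choose_two: "2 * (m choose 2) = m * (m - 1)" for m :: nat
  proof -
    have "even (m * (m - 1))" by (cases "even m") auto
    then show ?thesis by (simp add: choose_two)
  qed
  obtain t where s: "s = k + t"
    using assms le_Suc_ex by blast
  have "2 * ((s choose 2) - (k choose 2)) = s * (s - 1) - k * (k - 1)"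
    using binomial_right_mono[OF assms, of 2] by (simp add: diff_mult_distrib2 two_choose_two)
  also have "\<dots> = t * (s + k - 1)"
    unfolding s by (cases k; cases t) (simp_all add: algebra_simps)
  finally show ?thesis
    using s by simp
qed

lemma binomial_term_le_if_le_double:
  fixes s t k :: nat and r :: real
  assumes "s \<le> 2 * t" "1 \<le> t" "1 \<le> k" "0 \<le> r" "r \<le> 1 / 2 ^ 38"
  shows "real (s choose t) * (8 * real s * r ^ k / real t) ^ t \<le> (1/4) ^ t"
proof -
  define x where "x = 8 * real s * r ^ k / real t"
  have "s choose t \<le> 2 ^ (2 * t)"
    using binomial_le_pow2[of s t] power_increasing[OF assms(1), of "2::nat"] by linarith
  then have "real (s choose t) \<le> 2 ^ (2 * t)"
    by (metis of_nat_le_iff of_nat_numeral of_nat_power)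
  then have binomial: "real (s choose t) \<le> 4 ^ t"
    by (simp add: power_mult)
  have "r ^ k \<le> r"
    using assms(3-5) by (simp add: power_le_one power_decreasing[of 1 k r, simplified])
  then have "x \<le> (8 * real s / real t) * r"
    using assms(2,4) by (simp add: x_def divide_right_mono mult_left_mono)
  also have "\<dots> \<le> 16 * (1 / 2 ^ 38)"
    using assms(1,2,4,5) by (intro mult_mono) (auto simp: field_simps)
  finally have "x \<le> 1 / 2 ^ 34" by simp
  then have "real (s choose t) * x ^ t \<le> 4 ^ t * (1 / 2 ^ 34) ^ t"
    using binomial assms(4) by (intro mult_mono power_mono) (auto simp: x_def)
  also have "\<dots> = (4 * (1 / 2 ^ 34)) ^ t"
    by (simp only: power_mult_distrib)
  also have "\<dots> \<le> (1/4) ^ t"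
    by (intro power_mono) auto
  finally show ?thesis
    by (simp add: x_def)
qed

lemma binomial_term_le_if_double_less:
  fixes s t :: nat and r :: real
  assumes "2 * t < s" "1 \<le> t" "0 \<le> r" "r \<le> 1 / 2 ^ 38"
  shows "real (s choose t) * (8 * real s * r ^ (s - t - 1) / real t) ^ t \<le> (1/4) ^ t"
proof -
  define k where "k = s - t - 1"
  define x where "x = 8 * real s * r ^ k / real t"
  have "0 \<le> x"
    using assms(3) by (simp add: x_def)
  have "real s < 2 ^ s"
    using less_exp[of s] of_nat_less_iff[of s "2 ^ s", where 'a = real] by simp
  then have "real s ^ 2 \<le> (2 ^ s) ^ 2"
    by (intro power_mono) auto
  then have "32 * real s ^ 2 \<le> 2 ^ (2 * s + 5)"
    by (simp add: power_add power_mult mult.commute)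
  also have "\<dots> \<le> 2 ^ (38 * k)"
    using assms(1,2) by (intro power_increasing) (auto simp: k_def)
  finally have s_square: "32 * real s ^ 2 \<le> 2 ^ (38 * k)" .
  have "x \<le> 8 * real s * r ^ k / 1"
    unfolding x_def using assms(2,3) by (intro divide_left_mono) auto
  then have "real s * x \<le> real s * (8 * real s * r ^ k)"
    by (intro mult_left_mono) auto
  also have "\<dots> = 8 * real s ^ 2 * r ^ k"
    by (simp add: power2_eq_square)
  also have "\<dots> \<le> 8 * real s ^ 2 * (1 / 2 ^ 38) ^ k"
    using assms(3,4) by (intro mult_left_mono power_mono) auto
  also have "\<dots> \<le> 1/4"
    using s_square by (simp add: power_mult power_one_over divide_le_eq)
  finally have "real s * x \<le> 1/4" .
  have "real (s choose t) \<le> real s ^ t"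
    using binomial_le_pow[of t s] assms(1) of_nat_le_iff[of "s choose t" "s ^ t", where 'a = real]
    by simp
  then have "real (s choose t) * x ^ t \<le> (real s * x) ^ t"
    using \<open>0 \<le> x\<close> by (simp add: power_mult_distrib mult_right_mono)
  also have "\<dots> \<le> (1/4) ^ t"
    using \<open>real s * x \<le> 1/4\<close> \<open>0 \<le> x\<close> by (intro power_mono) auto
  finally show ?thesis
    by (simp add: x_def k_def)
qed

lemma binomial_term_le:
  fixes s t :: nat and r :: real
  assumes "1 \<le> t" "t + 2 \<le> s" "0 \<le> r" "r \<le> 1 / 2 ^ 38"
  shows "real (s choose t) * (8 * real s * r ^ (s - t - 1) / real t) ^ t \<le> (1/4) ^ t"
proof (cases "s \<le> 2 * t")
  case True
  then show ?thesis
    using assms by (intro binomial_term_le_if_le_double) auto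
next
  case False
  then show ?thesis
    using assms by (intro binomial_term_le_if_double_less) auto
qed

lemma agreement_term_le:
  fixes s k n :: nat and r :: real
  assumes "2 \<le> k" "k < s" "0 \<le> r" "r \<le> 1 / 2 ^ 38" "real n * r ^ s = 8 * real s"
  shows "real (s choose k) * (real n / real (s - k)) ^ (s - k) * (r ^ 2) ^ ((s choose 2) - (k choose 2))
    \<le> (1/4) ^ (s - k)"
proof -
  define t where "t = s - k"
  have "s + k - 1 = s + (s - t - 1)"
    using assms(1,2) by (simp add: t_def)
  then have "2 * ((s choose 2) - (k choose 2)) = t * s + t * (s - t - 1)"
    using choose_two_diff[of k s] assms(2) by (simp add: add_mult_distrib2 flip: t_def)
  then have "(r ^ 2) ^ ((s choose 2) - (k choose 2)) = (r ^ s) ^ t * (r ^ (s - t - 1)) ^ t"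
    by (simp add: power_add mult.commute flip: power_mult)
  then have "(real n / real t) ^ t * (r ^ 2) ^ ((s choose 2) - (k choose 2))
      = (real n * r ^ s * r ^ (s - t - 1) / real t) ^ t"
    by (simp add: power_mult_distrib power_divide mult_ac)
  also have "\<dots> = (8 * real s * r ^ (s - t - 1) / real t) ^ t"
    using assms(5) by simp
  finally have "(real n / real t) ^ t * (r ^ 2) ^ ((s choose 2) - (k choose 2))
      = (8 * real s * r ^ (s - t - 1) / real t) ^ t" .
  moreover have "s choose k = s choose t"
    using binomial_symmetric[of k s] assms(2) by (simp add: t_def)
  moreover have "real (s choose t) * (8 * real s * r ^ (s - t - 1) / real t) ^ t \<le> (1/4) ^ t"
    using assms by (intro binomial_term_le) (auto simp: t_def)
  ultimately show ?thesis
    unfolding t_def[symmetric] by (simp add: mult.assoc)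
qed

section \<open>Janson's inequality for transversal cliques\<close>

lemma finite_partite_edges: "finite Y \<Longrightarrow> finite (partite_edges Y col)"
proof -
  assume "finite Y"
  have "partite_edges Y col \<subseteq> (\<lambda>(u, v). {u, v}) ` (Y \<times> Y)"
    by (auto simp: partite_edges_def)
  then show ?thesis
    using \<open>finite Y\<close> by (meson finite_SigmaI finite_imageI finite_subset)
qed

lemma prob_no_clique_le_janson:
  assumes "finite Y"
  shows "measure_pmf.prob (random_partite_graph Y col \<rho>) {f. \<not> contains_clique {e. f e} s}
    \<le> exp (- janson_mu (random_partite_graph Y col \<rho>) (\<lambda>\<phi>. clique_edges \<phi> {..<s}) (transversals Y col s)
           + janson_delta (random_partite_graph Y col \<rho>) (\<lambda>\<phi>. clique_edges \<phi> {..<s}) (transversals Y col s))"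
proof -
  have "{f. \<not> contains_clique {e. f e} s}
      \<subseteq> {f. \<forall>\<phi>\<in>transversals Y col s. f \<notin> all_present (clique_edges \<phi> {..<s})}"
    using contains_clique_if_all_present by blast
  then have "measure_pmf.prob (random_partite_graph Y col \<rho>) {f. \<not> contains_clique {e. f e} s}
      \<le> measure_pmf.prob (random_partite_graph Y col \<rho>) {f. \<forall>\<phi>\<in>transversals Y col s. f \<notin> all_present (clique_edges \<phi> {..<s})}"
    by (rule measure_pmf.finite_measure_mono) simp
  also have "\<dots> \<le> exp (- janson_mu (random_partite_graph Y col \<rho>) (\<lambda>\<phi>. clique_edges \<phi> {..<s}) (transversals Y col s)
           + janson_delta (random_partite_graph Y col \<rho>) (\<lambda>\<phi>. clique_edges \<phi> {..<s}) (transversals Y col s))"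
    unfolding random_partite_graph_def
    using assms(1) clique_edges_subset_partite_edges
    by (intro janson_inequality finite_partite_edges finite_transversals)
  finally show ?thesis .
qed

lemma prob_transversal_clique:
  assumes "finite Y" "0 \<le> \<rho>" "\<rho> \<le> 1" "\<phi> \<in> transversals Y col s"
  shows "measure_pmf.prob (random_partite_graph Y col \<rho>) (all_present (clique_edges \<phi> {..<s}))
    = \<rho> ^ (s choose 2)"
  using prob_all_present[OF finite_partite_edges[OF assms(1)]
      clique_edges_subset_partite_edges[OF assms(4)] assms(2,3)]
    card_clique_edges[OF _ inj_on_transversal[OF assms(4)]]
  by (simp add: random_partite_graph_def)

lemma janson_mu_transversal_cliques:
  assumes "finite Y" "0 \<le> \<rho>" "\<rho> \<le> 1"
  shows "janson_mu (random_partite_graph Y col \<rho>) (\<lambda>\<phi>. clique_edges \<phi> {..<s}) (transversals Y col s)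
    = real (card (transversals Y col s)) * \<rho> ^ (s choose 2)"
  using prob_transversal_clique[OF assms] by (simp add: janson_mu_def)

lemma prob_two_transversal_cliques:
  assumes "finite Y" "0 \<le> \<rho>" "\<rho> \<le> 1"
    and \<phi>: "\<phi> \<in> transversals Y col s" and \<psi>: "\<psi> \<in> transversals Y col s"
  shows "measure_pmf.prob (random_partite_graph Y col \<rho>)
      (all_present (clique_edges \<phi> {..<s}) \<inter> all_present (clique_edges \<psi> {..<s}))
    = \<rho> ^ (s choose 2) * \<rho> ^ ((s choose 2) - (card {i. i < s \<and> \<phi> i = \<psi> i} choose 2))"
proof -
  define S where "S \<xi> = clique_edges \<xi> {..<s}" for \<xi> :: "nat \<Rightarrow> 'a"
  have card_S: "card (S \<xi>) = s choose 2" if "\<xi> \<in> transversals Y col s" for \<xi>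
    using card_clique_edges[OF _ inj_on_transversal[OF that]] by (simp add: S_def)
  have finite_S: "finite (S \<xi>)" if "\<xi> \<in> transversals Y col s" for \<xi>
    using clique_edges_subset_partite_edges[OF that] finite_partite_edges[OF assms(1)]
    by (auto simp: S_def intro: finite_subset)
  then have "card (S \<phi> \<union> S \<psi>) + card (S \<phi> \<inter> S \<psi>) = 2 * (s choose 2)"
    using card_Un_Int[of "S \<phi>" "S \<psi>"] card_S \<phi> \<psi> by simp
  moreover have "card (S \<phi> \<inter> S \<psi>) = card {i. i < s \<and> \<phi> i = \<psi> i} choose 2"
    unfolding S_def clique_edges_Int_transversals[OF \<phi> \<psi>]
    by (rule card_clique_edges) (auto intro: inj_on_subset[OF inj_on_transversal[OF \<phi>]])
  moreover have "card (S \<phi> \<inter> S \<psi>) \<le> s choose 2"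
    using card_mono[of "S \<phi>" "S \<phi> \<inter> S \<psi>"] card_S \<phi> finite_S[OF \<phi>] by auto
  ultimately have "card (S \<phi> \<union> S \<psi>) = (s choose 2) + ((s choose 2) - (card {i. i < s \<and> \<phi> i = \<psi> i} choose 2))"
    by linarith
  moreover have "S \<phi> \<union> S \<psi> \<subseteq> partite_edges Y col"
    using clique_edges_subset_partite_edges[OF \<phi>] clique_edges_subset_partite_edges[OF \<psi>]
    by (simp add: S_def)
  ultimately show ?thesis
    using prob_all_present[OF finite_partite_edges[OF assms(1)] _ assms(2,3), of "S \<phi> \<union> S \<psi>"]
    by (simp add: random_partite_graph_def all_present_Un power_add S_def)
qed

lemma agreement_of_overlapping_transversals:
  assumes \<phi>: "\<phi> \<in> transversals Y col s" and \<psi>: "\<psi> \<in> transversals Y col s" and "\<psi> \<noteq> \<phi>"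
    and "clique_edges \<phi> {..<s} \<inter> clique_edges \<psi> {..<s} \<noteq> {}"
  shows "card {i. i < s \<and> \<phi> i = \<psi> i} \<in> {2..<s}"
proof -
  have "clique_edges \<phi> {i. i < s \<and> \<phi> i = \<psi> i} \<noteq> {}"
    using assms(4) by (simp add: clique_edges_Int_transversals[OF \<phi> \<psi>])
  then have "2 \<le> card {i. i < s \<and> \<phi> i = \<psi> i}"
    by (rule two_le_card_if_clique_edges_nonempty) simp
  moreover have "{i. i < s \<and> \<phi> i = \<psi> i} \<subset> {..<s}"
  proof
    show "{i. i < s \<and> \<phi> i = \<psi> i} \<subseteq> {..<s}" by auto
    show "{i. i < s \<and> \<phi> i = \<psi> i} \<noteq> {..<s}"
    proof
      assume "{i. i < s \<and> \<phi> i = \<psi> i} = {..<s}"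
      then have "\<phi> = \<psi>"
        using \<phi> \<psi> unfolding transversals_def by (intro PiE_ext[of \<phi> "{..<s}"]) auto
      with \<open>\<psi> \<noteq> \<phi>\<close> show False by simp
    qed
  qed
  then have "card {i. i < s \<and> \<phi> i = \<psi> i} < card {..<s}"
    by (intro psubset_card_mono) simp_all
  ultimately show ?thesis by simp
qed

lemma agreement_class_term_le:
  fixes r :: real
  assumes "finite Y" "0 \<le> r" "r \<le> 1 / 2 ^ 38" "real (card Y) * r ^ s = 8 * real s"
    and "\<phi> \<in> transversals Y col s" "2 \<le> k" "k < s"
  shows "real (card {\<psi>\<in>transversals Y col s. card {i. i < s \<and> \<phi> i = \<psi> i} = k})
      * (r ^ 2) ^ ((s choose 2) - (k choose 2))
    \<le> (1/4) ^ (s - k)"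
proof -
  have "real (card {\<psi>\<in>transversals Y col s. card {i. i < s \<and> \<phi> i = \<psi> i} = k})
      * (r ^ 2) ^ ((s choose 2) - (k choose 2))
    \<le> real (s choose k) * (real (card Y) / real (s - k)) ^ (s - k) * (r ^ 2) ^ ((s choose 2) - (k choose 2))"
    using card_transversals_with_agreement_le[OF assms(1,5,7)] by (intro mult_right_mono) auto
  also have "\<dots> \<le> (1/4) ^ (s - k)"
    using assms by (intro agreement_term_le) auto
  finally show ?thesis .
qed

lemma sum_prob_overlapping_transversal_cliques_le:
  fixes r :: real
  assumes "finite Y" "0 \<le> r" "r \<le> 1 / 2 ^ 38" "real (card Y) * r ^ s = 8 * real s"
    and \<phi>: "\<phi> \<in> transversals Y col s"
  shows "(\<Sum>\<psi>\<in>{\<psi>\<in>transversals Y col s. \<psi> \<noteq> \<phi> \<and> clique_edges \<phi> {..<s} \<inter> clique_edges \<psi> {..<s} \<noteq> {}}.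
      measure_pmf.prob (random_partite_graph Y col (r ^ 2))
        (all_present (clique_edges \<phi> {..<s}) \<inter> all_present (clique_edges \<psi> {..<s})))
    \<le> (r ^ 2) ^ (s choose 2) / 3"
proof -
  define \<rho> where "\<rho> = r ^ 2"
  define Q where "Q = {\<psi>\<in>transversals Y col s. \<psi> \<noteq> \<phi> \<and> clique_edges \<phi> {..<s} \<inter> clique_edges \<psi> {..<s} \<noteq> {}}"
  define agree where "agree \<psi> = card {i. i < s \<and> \<phi> i = \<psi> i}" for \<psi>
  define g where "g k = \<rho> ^ ((s choose 2) - (k choose 2))" for k
  have "0 \<le> \<rho>" "\<rho> \<le> 1"
    using assms(2,3) by (simp_all add: \<rho>_def power_le_one)
  have "finite Q"
    using finite_transversals[OF assms(1)] by (simp add: Q_def)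
  have "(\<Sum>\<psi>\<in>Q. measure_pmf.prob (random_partite_graph Y col \<rho>)
        (all_present (clique_edges \<phi> {..<s}) \<inter> all_present (clique_edges \<psi> {..<s})))
      = \<rho> ^ (s choose 2) * (\<Sum>\<psi>\<in>Q. g (agree \<psi>))"
    using prob_two_transversal_cliques[OF assms(1) \<open>0 \<le> \<rho>\<close> \<open>\<rho> \<le> 1\<close> \<phi>]
    by (simp add: Q_def g_def agree_def sum_distrib_left)
  also have "(\<Sum>\<psi>\<in>Q. g (agree \<psi>)) = (\<Sum>k\<in>{2..<s}. \<Sum>\<psi>\<in>{\<psi>\<in>Q. agree \<psi> = k}. g (agree \<psi>))"
  proof (rule sum.group[symmetric, OF \<open>finite Q\<close>])
    show "agree ` Q \<subseteq> {2..<s}"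
    proof
      fix k assume "k \<in> agree ` Q"
      then obtain \<psi> where "\<psi> \<in> Q" "k = agree \<psi>" by blast
      then show "k \<in> {2..<s}"
        unfolding Q_def agree_def using agreement_of_overlapping_transversals[OF \<phi>] by blast
    qed
  qed simp
  also have "\<dots> = (\<Sum>k\<in>{2..<s}. real (card {\<psi>\<in>Q. agree \<psi> = k}) * g k)"
    by (intro sum.cong refl) simp
  also have "\<dots> \<le> (\<Sum>k\<in>{2..<s}. (1/4) ^ (s - k))"
  proof (rule sum_mono)
    fix k assume k: "k \<in> {2..<s}"
    have "card {\<psi>\<in>Q. agree \<psi> = k} \<le> card {\<psi>\<in>transversals Y col s. agree \<psi> = k}"
      using finite_transversals[OF assms(1)] by (intro card_mono) (auto simp: Q_def)
    then show "real (card {\<psi>\<in>Q. agree \<psi> = k}) * g k \<le> (1/4) ^ (s - k)"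
      using agreement_class_term_le[OF assms, of k] k \<open>0 \<le> \<rho>\<close>
      unfolding agree_def g_def \<rho>_def
      by (smt (verit) atLeastLessThan_iff mult_right_mono of_nat_mono zero_le_power)
  qed
  also have "\<dots> \<le> 1/3"
    by (rule sum_quarter_powers_le)
  finally show ?thesis
    using \<open>0 \<le> \<rho>\<close> by (simp add: Q_def \<rho>_def mult_left_mono)
qed

lemma janson_delta_transversal_cliques_le:
  fixes r :: real
  assumes "finite Y" "0 \<le> r" "r \<le> 1 / 2 ^ 38" "real (card Y) * r ^ s = 8 * real s"
  shows "janson_delta (random_partite_graph Y col (r ^ 2)) (\<lambda>\<phi>. clique_edges \<phi> {..<s}) (transversals Y col s)
    \<le> janson_mu (random_partite_graph Y col (r ^ 2)) (\<lambda>\<phi>. clique_edges \<phi> {..<s}) (transversals Y col s) / 3"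
proof -
  have "janson_delta (random_partite_graph Y col (r ^ 2)) (\<lambda>\<phi>. clique_edges \<phi> {..<s}) (transversals Y col s)
      \<le> (\<Sum>\<phi>\<in>transversals Y col s. (r ^ 2) ^ (s choose 2) / 3)"
    unfolding janson_delta_def
    by (intro sum_mono sum_prob_overlapping_transversal_cliques_le[OF assms])
  also have "\<dots> = janson_mu (random_partite_graph Y col (r ^ 2)) (\<lambda>\<phi>. clique_edges \<phi> {..<s}) (transversals Y col s) / 3"
    using assms(2,3) by (simp add: janson_mu_transversal_cliques[OF assms(1)] power_le_one)
  finally show ?thesis .
qed

lemma janson_mu_transversal_cliques_ge:
  fixes r :: real
  assumes "1 \<le> s" "finite Y" "card Y = n" "\<forall>y\<in>Y. col y < s"
    and "\<forall>i<s. real n / (2 * real s) \<le> real (card (colour_class Y col i))"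
    and "0 \<le> r" "r \<le> 1" "real n * r ^ s = 8 * real s"
  shows "4 ^ (s - 1) * real n / 2
    \<le> janson_mu (random_partite_graph Y col (r ^ 2)) (\<lambda>\<phi>. clique_edges \<phi> {..<s}) (transversals Y col s)"
proof -
  have "0 < n"
    using assms(1,8) by (cases n) auto
  define a where "a = real n / (2 * real s)"
  have "0 < a" using assms(1) \<open>0 < n\<close> by (simp add: a_def)
  have "a ^ (s - 1) * (real n / 2) \<le> real (card (transversals Y col s))"
    using card_transversals_ge[OF assms(2,4,1) \<open>0 < a\<close>] assms(1,3,5)
    by (simp add: a_def field_simps)
  have "2 * (s choose 2) = s * (s - 1)"
    using choose_two_diff[of 0 s] by (simp add: binomial_eq_0)
  then have "(r ^ 2) ^ (s choose 2) = (r ^ s) ^ (s - 1)"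
    by (simp flip: power_mult)
  also have "r ^ s = 8 * real s / real n"
    using assms(8) \<open>0 < n\<close> by (simp add: field_simps)
  finally have "a ^ (s - 1) * (r ^ 2) ^ (s choose 2) = (a * (8 * real s / real n)) ^ (s - 1)"
    by (simp only: power_mult_distrib)
  also have "a * (8 * real s / real n) = 4"
    using assms(1) \<open>0 < n\<close> by (simp add: a_def)
  finally have "4 ^ (s - 1) * real n / 2 = a ^ (s - 1) * (real n / 2) * (r ^ 2) ^ (s choose 2)"
    by (simp add: mult_ac)
  also have "\<dots> \<le> real (card (transversals Y col s)) * (r ^ 2) ^ (s choose 2)"
    using \<open>a ^ (s - 1) * (real n / 2) \<le> _\<close> assms(6) by (intro mult_right_mono) auto
  finally show ?thesis
    using assms(6,7) by (simp add: janson_mu_transversal_cliques[OF assms(2)] power_le_one)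
qed

lemma two_powr_eq_four_power_div_four:
  fixes s :: nat
  assumes "2 \<le> s"
  shows "2 powr (2 * real s - 4) = 4 ^ (s - 1) / 4"
proof -
  have "2 powr (2 * real s - 4) = 2 ^ (2 * s - 4)"
    using assms powr_realpow[of 2 "2 * s - 4"] by (simp add: of_nat_diff)
  also have "(2::real) ^ (2 * s - 4) = 2 ^ (2 * (s - 1)) / 2 ^ 2"
    using assms power_diff[of "2::real" 2 "2 * (s - 1)"] by (simp add: diff_mult_distrib2)
  finally show ?thesis
    by (simp add: power_mult)
qed

theorem proposition2p2:
  fixes Y :: "'a set" and col :: "'a \<Rightarrow> nat" and s n :: nat and \<rho> :: real
  assumes "s \<ge> 3"
    and "real n \<ge> 2 powr (40 * real s)"
    and "\<rho> = (8 * real s / real n) powr (2 / real s)"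
    and "finite Y" and "card Y = n"
    and "\<forall>y\<in>Y. col y < s"
    and "\<forall>i<s. real (card {y\<in>Y. col y = i}) \<ge> real n / (2 * real s)"
  shows "measure_pmf.prob (random_partite_graph Y col \<rho>)
           {f. \<not> contains_clique {e. f e} s}
         \<le> exp (- (2 powr (2 * real s - 4)) * real n)"
proof -
  define r where "r = (8 * real s / real n) powr (1 / real s)"
  have \<rho>: "\<rho> = r ^ 2" and r: "real n * r ^ s = 8 * real s" "0 \<le> r" "r \<le> 1 / 2 ^ 38"
    using edge_probability_root[OF assms(1,2)] assms(3) unfolding r_def by auto
  define \<mu> where "\<mu> = janson_mu (random_partite_graph Y col \<rho>) (\<lambda>\<phi>. clique_edges \<phi> {..<s}) (transversals Y col s)"
  define \<Delta> where "\<Delta> = janson_delta (random_partite_graph Y col \<rho>) (\<lambda>\<phi>. clique_edges \<phi> {..<s}) (transversals Y col s)"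
  have janson: "measure_pmf.prob (random_partite_graph Y col \<rho>) {f. \<not> contains_clique {e. f e} s}
      \<le> exp (- \<mu> + \<Delta>)"
    unfolding \<mu>_def \<Delta>_def by (rule prob_no_clique_le_janson[OF assms(4)])
  have "\<Delta> \<le> \<mu> / 3"
    unfolding \<mu>_def \<Delta>_def \<rho>
    using janson_delta_transversal_cliques_le[OF assms(4) r(2,3)] r(1) assms(5) by simp
  moreover have "4 ^ (s - 1) * real n / 2 \<le> \<mu>"
    unfolding \<mu>_def \<rho>
    using janson_mu_transversal_cliques_ge[OF _ assms(4,5,6) _ r(2) _ r(1)] assms(1,7) r(3)
    by (simp add: colour_class_def order.trans[OF r(3)])
  moreover have "- (2 powr (2 * real s - 4)) * real n = - (4 ^ (s - 1) * real n) / 4"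
    using two_powr_eq_four_power_div_four[of s] assms(1) by simp
  moreover have "0 \<le> 4 ^ (s - 1) * real n"
    by simp
  ultimately have "- \<mu> + \<Delta> \<le> - (2 powr (2 * real s - 4)) * real n"
    by linarith
  with janson show ?thesis
    by (meson exp_le_cancel_iff order.trans)
qed

end
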